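(* Let $A$ be a finite set, let $C$ and $D$ be total clones on $A$ with $D \subseteq C$, let $T\subseteq P_A$ be a strong partial class, and let $I \subseteq \mathcal{I}_{\mathrm{str}}(C)$, such that: (i) $T \cap O_A \subseteq D$; (ii) $T \star \mathrm{Str}(D) \subseteq \mathrm{Str}(D) \cup T$ and $\mathrm{Str}(D) \star T \subseteq \mathrm{Str}(D) \cup T$; (iii) $X \cap T \neq Y \cap T$ for all $X,Y \in I$ with $X \neq Y$. Then $|\mathcal{I}_{\mathrm{str}}(D)| \geq |I|$.
   Context: A partial function of arity $n$ on $A$ is a map $f:\operatorname{dom} f\to A$ with $\operatorname{dom} f\subseteq A^n$; total if $\operatorname{dom} f=A^n$. $P_A$ is the set of all partial functions, $O_A$ the set of total ones. Composition $F=f(g_1,\dots,g_n)$ is given by $F(\mathbf{x})=f(g_1(\mathbf{x}),\dots,g_n(\mathbf{x}))$ on $\operatorname{dom} F=\{\mathbf{x}\in\bigcap_i\operatorname{dom} g_i : (g_1(\mathbf{x}),\dots,g_n(\mathbf{x}))\in\operatorname{dom} f\}$. A partial clone is a composition-closed subset of $P_A$ containing all projections; a total clone is one contained in $O_A$. $f\le g$ means $\operatorname{dom} f\subseteq \operatorname{dom} g$ and $f=g$ on $\operatorname{dom} f$; $\mathrm{Str}(X)=\{f\in P_A:\exists g\in X,\ f\le g\}$, and $X$ is strong if $X=\mathrm{Str}(X)$. For a total clone $C$, $\mathcal{I}_{\mathrm{str}}(C)$ is the set of strong partial clones $X$ with $X\cap O_A=C$. For $f$ $n$-ary and $g$ $m$-ary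 define: $(\zeta f)(x_1,\dots,x_n)=f(x_2,\dots,x_n,x_1)$; $(\tau f)(x_1,\dots,x_n)=f(x_2,x_1,x_3,\dots,x_n)$; $(\Delta f)(x_1,\dots,x_{n-1})=f(x_1,x_1,x_2,\dots,x_{n-1})$ (with $\zeta f=\tau f=\Delta f=f$ if $n=1$); $(\nabla f)(x_1,\dots,x_{n+1})=f(x_2,\dots,x_{n+1})$; $(f\star g)(x_1,\dots,x_{n+m-1})=f(g(x_1,\dots,x_m),x_{m+1},\dots,x_{n+m-1})$, with domains given by the composition rule. A partial class is a subset of $P_A$ closed under $\star,\zeta,\tau,\nabla,\Delta$; it is strong if it equals its $\mathrm{Str}$. For $X,Y\subseteq P_A$, $X\star Y=\{f\star g: f\in X, g\in Y\}$. *)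

theory Defs
  imports Main
begin

text \<open>The base set A is the (finite, nonempty) universe of the type 'a.
  A partial function of arity n is a pair (n, f) with n >= 1 and
  f :: 'a list => 'a option, where f xs is defined only if length xs = n
  (lists of length n model A^n).\<close>

type_synonym 'a pfun = "nat \<times> ('a list \<Rightarrow> 'a option)"

definition arity :: "'a pfun \<Rightarrow> nat" where "arity F = fst F"
definition fn :: "'a pfun \<Rightarrow> 'a list \<Rightarrow> 'a option" where "fn F = snd F"

definition P_A :: "'a pfun set" where
  "P_A = {F. arity F \<ge> 1 \<and> (\<forall>xs. fn F xs \<noteq> None \<longrightarrow> length xs = arity F)}"

definition O_A :: "'a pfun set" where
  "O_A = {F \<in> P_A. \<forall>xs. length xs = arity F \<longrightarrow> fn F xs \<noteq> None}"

definition proj :: "nat \<Rightarrow> nat \<Rightarrow> 'a pfun" where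
  "proj n i = (n, \<lambda>xs. if length xs = n then Some (xs ! i) else None)"

definition pcomp :: "'a pfun \<Rightarrow> 'a pfun list \<Rightarrow> 'a pfun" where
  "pcomp F Gs = (arity (hd Gs),
     \<lambda>xs. if length xs = arity (hd Gs) \<and> (\<forall>G\<in>set Gs. fn G xs \<noteq> None)
          then fn F (map (\<lambda>G. the (fn G xs)) Gs) else None)"

definition partial_clone :: "'a pfun set \<Rightarrow> bool" where
  "partial_clone X \<longleftrightarrow> X \<subseteq> P_A
     \<and> (\<forall>n i. 1 \<le> n \<and> i < n \<longrightarrow> proj n i \<in> X)
     \<and> (\<forall>F Gs m. F \<in> X \<and> set Gs \<subseteq> X \<and> length Gs = arity F
           \<and> (\<forall>G\<in>set Gs. arity G = m) \<longrightarrow> pcomp F Gs \<in> X)"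

definition total_clone :: "'a pfun set \<Rightarrow> bool" where
  "total_clone C \<longleftrightarrow> partial_clone C \<and> C \<subseteq> O_A"

definition pf_le :: "'a pfun \<Rightarrow> 'a pfun \<Rightarrow> bool" where
  "pf_le F G \<longleftrightarrow> arity F = arity G \<and> (\<forall>xs v. fn F xs = Some v \<longrightarrow> fn G xs = Some v)"

definition Str :: "'a pfun set \<Rightarrow> 'a pfun set" where
  "Str X = {F \<in> P_A. \<exists>G\<in>X. pf_le F G}"

definition strong :: "'a pfun set \<Rightarrow> bool" where
  "strong X \<longleftrightarrow> X = Str X"

definition I_str :: "'a pfun set \<Rightarrow> 'a pfun set set" where
  "I_str C = {X. partial_clone X \<and> strong X \<and> X \<inter> O_A = C}"

definition zeta :: "'a pfun \<Rightarrow> 'a pfun" where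
  "zeta F = (arity F, \<lambda>xs. if length xs = arity F then fn F (tl xs @ [hd xs]) else None)"

definition tau :: "'a pfun \<Rightarrow> 'a pfun" where
  "tau F = (if arity F < 2 then F else
     (arity F, \<lambda>xs. if length xs = arity F then fn F (xs ! 1 # xs ! 0 # drop 2 xs) else None))"

definition Delta :: "'a pfun \<Rightarrow> 'a pfun" where
  "Delta F = (if arity F < 2 then F else
     (arity F - 1, \<lambda>xs. if length xs = arity F - 1 then fn F (hd xs # xs) else None))"

definition nabla :: "'a pfun \<Rightarrow> 'a pfun" where
  "nabla F = (arity F + 1, \<lambda>xs. if length xs = arity F + 1 then fn F (tl xs) else None)"

definition pstar :: "'a pfun \<Rightarrow> 'a pfun \<Rightarrow> 'a pfun" where
  "pstar F G = (arity F + arity G - 1,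
     \<lambda>xs. if length xs = arity F + arity G - 1 then
            (case fn G (take (arity G) xs) of None \<Rightarrow> None
             | Some y \<Rightarrow> fn F (y # drop (arity G) xs))
          else None)"

definition set_star :: "'a pfun set \<Rightarrow> 'a pfun set \<Rightarrow> 'a pfun set" where
  "set_star X Y = {pstar F G | F G. F \<in> X \<and> G \<in> Y}"

definition partial_class :: "'a pfun set \<Rightarrow> bool" where
  "partial_class T \<longleftrightarrow> T \<subseteq> P_A
     \<and> (\<forall>F\<in>T. \<forall>G\<in>T. pstar F G \<in> T)
     \<and> (\<forall>F\<in>T. zeta F \<in> T \<and> tau F \<in> T \<and> nabla F \<in> T \<and> Delta F \<in> T)"

end

theory Submission
  imports Defs "HOL-Combinatorics.Permutations"
begin

text \<open>The set \<open>K = Str D \<union> T\<close> is a strong partial clone with \<open>K \<inter> O_A = D\<close>.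
  Hypothesis (ii) makes the union of the partial classes \<open>Str D\<close> and \<open>T\<close> a partial class, and
  a partial class containing the projections is a partial clone: \<open>zeta\<close>, \<open>tau\<close>, \<open>nabla\<close> and
  \<open>Delta\<close> generate all substitutions of variables, and with these \<open>\<star>\<close> builds every
  composition one argument at a time. Hence \<open>X \<mapsto> X \<inter> K\<close> maps \<open>\<I>\<^sub>s\<^sub>t\<^sub>r(C)\<close> into
  \<open>\<I>\<^sub>s\<^sub>t\<^sub>r(D)\<close>, and by (iii) it is injective on \<open>I\<close>.\<close>

lemma pfun_eqI: "arity F = arity G \<Longrightarrow> (\<And>xs. fn F xs = fn G xs) \<Longrightarrow> F = G"
  by (cases F; cases G) (auto simp: arity_def fn_def)

lemma arity_ge_1_if_P_A: "F \<in> P_A \<Longrightarrow> arity F \<ge> 1"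
  by (simp add: P_A_def)

lemma fn_eq_None_if_P_A: "F \<in> P_A \<Longrightarrow> length xs \<noteq> arity F \<Longrightarrow> fn F xs = None"
  by (auto simp: P_A_def)

lemma arity_zeta [simp]: "arity (zeta F) = arity F"
  by (simp add: zeta_def arity_def)

lemma fn_zeta: "fn (zeta F) xs = (if length xs = arity F then fn F (tl xs @ [hd xs]) else None)"
  by (simp add: zeta_def fn_def arity_def)

lemma arity_tau [simp]: "arity (tau F) = arity F"
  by (simp add: tau_def arity_def)

lemma fn_tau: "arity F \<ge> 2 \<Longrightarrow>
    fn (tau F) xs = (if length xs = arity F then fn F (xs ! 1 # xs ! 0 # drop 2 xs) else None)"
  by (simp add: tau_def fn_def arity_def)

lemma arity_Delta: "arity F \<ge> 2 \<Longrightarrow> arity (Delta F) = arity F - 1"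
  by (simp add: Delta_def arity_def)

lemma fn_Delta: "arity F \<ge> 2 \<Longrightarrow>
    fn (Delta F) xs = (if length xs = arity F - 1 then fn F (hd xs # xs) else None)"
  by (simp add: Delta_def fn_def arity_def)

lemma arity_nabla [simp]: "arity (nabla F) = arity F + 1"
  by (simp add: nabla_def arity_def)

lemma fn_nabla: "fn (nabla F) xs = (if length xs = arity F + 1 then fn F (tl xs) else None)"
  by (simp add: nabla_def fn_def arity_def)

lemma arity_pstar [simp]: "arity (pstar F G) = arity F + arity G - 1"
  by (simp add: pstar_def arity_def)

lemma fn_pstar: "fn (pstar F G) xs = (if length xs = arity F + arity G - 1 then
    (case fn G (take (arity G) xs) of None \<Rightarrow> None | Some y \<Rightarrow> fn F (y # drop (arity G) xs))
    else None)"
  by (simp add: pstar_def fn_def arity_def)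

lemma arity_pcomp [simp]: "arity (pcomp F Gs) = arity (hd Gs)"
  by (simp add: pcomp_def arity_def)

lemma fn_pcomp: "fn (pcomp F Gs) xs = (if length xs = arity (hd Gs) \<and> (\<forall>G\<in>set Gs. fn G xs \<noteq> None)
    then fn F (map (\<lambda>G. the (fn G xs)) Gs) else None)"
  by (simp add: pcomp_def fn_def arity_def)

lemma arity_proj [simp]: "arity (proj n i) = n"
  by (simp add: proj_def arity_def)

lemma fn_proj: "fn (proj n i) xs = (if length xs = n then Some (xs ! i) else None)"
  by (simp add: proj_def fn_def)

lemma pstar_in_P_A: "F \<in> P_A \<Longrightarrow> G \<in> P_A \<Longrightarrow> pstar F G \<in> P_A"
  by (auto simp: P_A_def fn_pstar split: if_splits option.splits)

section \<open>Minors\<close>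

definition minor :: "'a pfun \<Rightarrow> nat \<Rightarrow> (nat \<Rightarrow> nat) \<Rightarrow> 'a pfun" where
  "minor F k s = (k, \<lambda>xs. if length xs = k then fn F (map (\<lambda>i. xs ! s i) [0..<arity F]) else None)"

lemma arity_minor [simp]: "arity (minor F k s) = k"
  by (simp add: minor_def arity_def)

lemma fn_minor: "fn (minor F k s) xs =
    (if length xs = k then fn F (map (\<lambda>i. xs ! s i) [0..<arity F]) else None)"
  by (simp add: minor_def fn_def)

lemma minor_in_P_A: "F \<in> P_A \<Longrightarrow> 1 \<le> k \<Longrightarrow> minor F k s \<in> P_A"
  by (auto simp: P_A_def fn_minor split: if_splits)

lemma minor_minor:
  assumes "\<forall>i<arity F. s i < k"
  shows "minor (minor F k s) k' r = minor F k' (r \<circ> s)"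
  by (rule pfun_eqI) (use assms in \<open>auto simp: fn_minor intro!: arg_cong[where f = "fn F"]\<close>)

lemma minor_cong: "\<forall>i<arity F. s i = s' i \<Longrightarrow> minor F k s = minor F k s'"
  by (rule pfun_eqI) (auto simp: fn_minor intro!: arg_cong[where f = "fn F"])

lemma minor_id:
  assumes "F \<in> P_A"
  shows "minor F (arity F) id = F"
proof (rule pfun_eqI)
  fix xs
  show "fn (minor F (arity F) id) xs = fn F xs"
    using assms map_nth[of xs] by (auto simp: fn_minor fn_eq_None_if_P_A)
qed simp

lemma zeta_eq_minor:
  assumes "F \<in> P_A"
  shows "zeta F = minor F (arity F) (\<lambda>i. Suc i mod arity F)"
proof (rule pfun_eqI)
  fix xs :: "'a list"
  have "tl xs @ [hd xs] = map (\<lambda>i. xs ! (Suc i mod arity F)) [0..<arity F]"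
    if "length xs = arity F"
  proof -
    have "xs \<noteq> []" using that arity_ge_1_if_P_A[OF assms] by auto
    then show ?thesis
      using that by (auto simp: rotate1_hd_tl[symmetric] nth_rotate1 intro!: nth_equalityI)
  qed
  then show "fn (zeta F) xs = fn (minor F (arity F) (\<lambda>i. Suc i mod arity F)) xs"
    by (simp add: fn_minor fn_zeta)
qed simp

lemma tau_eq_minor:
  assumes "arity F \<ge> 2"
  shows "tau F = minor F (arity F) (Transposition.transpose 0 1)"
proof (rule pfun_eqI)
  fix xs :: "'a list"
  have "xs ! 1 # xs ! 0 # drop 2 xs = map (\<lambda>i. xs ! Transposition.transpose 0 1 i) [0..<arity F]"
    if "length xs = arity F"
  proof (rule nth_equalityI)
    fix i assume "i < length (xs ! 1 # xs ! 0 # drop 2 xs)"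
    then show "(xs ! 1 # xs ! 0 # drop 2 xs) ! i = map (\<lambda>i. xs ! Transposition.transpose 0 1 i) [0..<arity F] ! i"
      using that assms by (cases i; cases "i - 1") (auto simp: nth_Cons')
  qed (use that assms in simp)
  then show "fn (tau F) xs = fn (minor F (arity F) (Transposition.transpose 0 1)) xs"
    using assms by (simp add: fn_minor fn_tau)
qed simp

lemma Delta_eq_minor:
  assumes "arity F \<ge> 2"
  shows "Delta F = minor F (arity F - 1) (\<lambda>i. i - 1)"
proof (rule pfun_eqI)
  fix xs :: "'a list"
  have "hd xs # xs = map (\<lambda>i. xs ! (i - 1)) [0..<arity F]" if "length xs = arity F - 1"
  proof (rule nth_equalityI)
    fix i assume "i < length (hd xs # xs)"
    then show "(hd xs # xs) ! i = map (\<lambda>i. xs ! (i - 1)) [0..<arity F] ! i"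
      using that assms by (cases xs; cases i) auto
  qed (use that assms in simp)
  then show "fn (Delta F) xs = fn (minor F (arity F - 1) (\<lambda>i. i - 1)) xs"
    using assms by (simp add: fn_minor fn_Delta)
qed (use assms in \<open>simp add: arity_Delta\<close>)

lemma nabla_eq_minor: "nabla F = minor F (arity F + 1) Suc"
proof (rule pfun_eqI)
  fix xs :: "'a list"
  have "tl xs = map (\<lambda>i. xs ! Suc i) [0..<arity F]" if "length xs = arity F + 1"
    using that by (auto intro!: nth_equalityI simp: nth_tl)
  then show "fn (nabla F) xs = fn (minor F (arity F + 1) Suc) xs"
    by (simp add: fn_minor fn_nabla)
qed simp

section \<open>Partial classes are closed under minors\<close>

definition closed_under_minor :: "'a pfun set \<Rightarrow> nat \<Rightarrow> (nat \<Rightarrow> nat) \<Rightarrow> bool" where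
  "closed_under_minor K n s \<longleftrightarrow> (\<forall>i<n. s i < n) \<and> (\<forall>F\<in>K. arity F = n \<longrightarrow> minor F n s \<in> K)"

lemma partial_class_in_P_A: "partial_class K \<Longrightarrow> F \<in> K \<Longrightarrow> F \<in> P_A"
  unfolding partial_class_def by blast

lemma closed_under_minor_comp:
  "closed_under_minor K n s \<Longrightarrow> closed_under_minor K n r \<Longrightarrow> closed_under_minor K n (r \<circ> s)"
  unfolding closed_under_minor_def by (auto simp: minor_minor[symmetric])

lemma closed_under_minor_cong:
  assumes "closed_under_minor K n s" "\<forall>i<n. s i = s' i"
  shows "closed_under_minor K n s'"
proof -
  have "minor F n s' = minor F n s" if "arity F = n" for F :: "'a pfun"
    using that assms(2) by (intro minor_cong) auto
  moreover have "\<forall>i<n. s' i < n"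
    using assms unfolding closed_under_minor_def by (simp add: Ball_def)
  ultimately show ?thesis
    using assms(1) unfolding closed_under_minor_def by simp
qed

lemma closed_under_minor_id: "partial_class K \<Longrightarrow> closed_under_minor K n id"
  using minor_id unfolding closed_under_minor_def partial_class_def by fastforce

lemma closed_under_minor_rotate:
  assumes "partial_class K" "n \<ge> 1"
  shows "closed_under_minor K n (\<lambda>i. (i + j) mod n)"
proof (induction j)
  case 0
  show ?case
    using closed_under_minor_id[OF assms(1), of n] by (rule closed_under_minor_cong) simp
next
  case (Suc j)
  have "closed_under_minor K n (\<lambda>i. Suc i mod n)"
    using assms zeta_eq_minor unfolding closed_under_minor_def partial_class_def by fastforce
  with Suc have "closed_under_minor K n ((\<lambda>i. Suc i mod n) \<circ> (\<lambda>i. (i + j) mod n))"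
    by (rule closed_under_minor_comp)
  then show ?case
    by (rule closed_under_minor_cong) (simp add: mod_Suc_eq)
qed

lemma closed_under_minor_transpose_conj:
  assumes "closed_under_minor K n p" "closed_under_minor K n q"
    and "\<forall>i<n. p (q i) = i" "\<forall>i<n. q (p i) = i"
    and "closed_under_minor K n (Transposition.transpose a b)" "a < n" "b < n"
  shows "closed_under_minor K n (Transposition.transpose (p a) (p b))"
proof -
  have "closed_under_minor K n (p \<circ> (Transposition.transpose a b \<circ> q))"
    using assms(1,2,5) by (intro closed_under_minor_comp)
  then show ?thesis
    by (rule closed_under_minor_cong) (use assms(3,4,6,7) in \<open>auto simp: transpose_def\<close>)
qed

lemma add_mod_add_mod_eq_self: "i < n \<Longrightarrow> j + k = n \<Longrightarrow> ((i + j) mod n + k) mod n = (i::nat)"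
  unfolding mod_add_left_eq add.assoc by simp

lemma closed_under_minor_transpose_01:
  assumes "partial_class K" "2 \<le> n"
  shows "closed_under_minor K n (Transposition.transpose 0 1)"
  unfolding closed_under_minor_def
proof (intro conjI allI impI ballI)
  fix i assume "i < n"
  then show "Transposition.transpose 0 1 i < n"
    using assms(2) by (auto simp: transpose_def)
next
  fix F assume "F \<in> K" "arity F = n"
  then show "minor F n (Transposition.transpose 0 1) \<in> K"
    using assms tau_eq_minor[of F] unfolding partial_class_def by auto
qed

text \<open>Conjugating by the rotation \<open>i \<mapsto> i + 1\<close> turns \<open>(0 d)\<close> into \<open>(1 d+1)\<close>, and
  \<open>(0 d+1) = (d+1 1) (1 0) (d+1 1)\<close>.\<close>

lemma closed_under_minor_transpose_0:
  assumes "partial_class K" "d < n"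
  shows "closed_under_minor K n (Transposition.transpose 0 d)"
  using assms(2)
proof (induction d)
  case 0
  show ?case using closed_under_minor_id[OF assms(1), of n] by (simp add: id_def)
next
  case (Suc d)
  define r where "r j = (\<lambda>i. (i + j) mod n)" for j
  have r_inv: "\<forall>i<n. r 1 (r (n - 1) i) = i" "\<forall>i<n. r (n - 1) (r 1 i) = i"
    using add_mod_add_mod_eq_self[of _ n "n - 1" 1] add_mod_add_mod_eq_self[of _ n 1 "n - 1"] Suc.prems
    unfolding r_def by simp_all
  have r: "closed_under_minor K n (r j)" for j
    unfolding r_def using Suc.prems by (intro closed_under_minor_rotate[OF assms(1)]) simp
  have "closed_under_minor K n (Transposition.transpose (r 1 0) (r 1 d))"
    using Suc.prems
    by (intro closed_under_minor_transpose_conj[OF r r r_inv Suc.IH]) simp_all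
  moreover have "r 1 0 = 1" "r 1 d = Suc d"
    using Suc.prems by (simp_all add: r_def)
  ultimately have t1: "closed_under_minor K n (Transposition.transpose (Suc d) 1)"
    by (simp add: transpose_commute)
  have "closed_under_minor K n (Transposition.transpose 1 0)"
    using closed_under_minor_transpose_01[OF assms(1)] Suc.prems by (simp add: transpose_commute)
  then have "closed_under_minor K n
      (Transposition.transpose (Suc d) 1 \<circ> Transposition.transpose 1 0 \<circ> Transposition.transpose (Suc d) 1)"
    using t1 by (intro closed_under_minor_comp)
  moreover have "Transposition.transpose (Suc d) 1 \<circ> Transposition.transpose 1 0
      \<circ> Transposition.transpose (Suc d) 1 = Transposition.transpose 0 (Suc d)"
    using transpose_comp_triple[where a = "Suc d" and b = 1 and c = 0] by (simp add: ac_simps)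
  ultimately show ?case
    by simp
qed

lemma closed_under_minor_transpose:
  assumes K: "partial_class K" and "a < n" "b < n"
  shows "closed_under_minor K n (Transposition.transpose a b)"
proof (cases "a = b \<or> b = 0")
  case True
  then show ?thesis
    using closed_under_minor_id[OF K] closed_under_minor_transpose_0[OF K] assms(2)
    by (auto simp: transpose_commute)
next
  case False
  have "closed_under_minor K n (Transposition.transpose a 0)"
    using closed_under_minor_transpose_0[OF K assms(2)] by (simp add: transpose_commute)
  then have "closed_under_minor K n
      (Transposition.transpose a 0 \<circ> Transposition.transpose 0 b \<circ> Transposition.transpose a 0)"
    using closed_under_minor_transpose_0[OF K assms(3)] by (intro closed_under_minor_comp)
  then show ?thesis
    using transpose_comp_triple[where a = a and b = 0 and c = b] False by simp
qed

lemma closed_under_minor_permutes: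
  assumes "partial_class K" "p permutes {..<n}"
  shows "closed_under_minor K n p"
  using assms(2) finite_lessThan
proof (induction rule: permutes_induct)
  case id
  show ?case by (rule closed_under_minor_id[OF assms(1)])
next
  case (swap a b p)
  then show ?case
    using closed_under_minor_transpose[OF assms(1)] by (intro closed_under_minor_comp) auto
qed

lemma inj_on_case_nat:
  assumes "inj_on s {..<n}" "c \<notin> s ` {..<n}"
  shows "inj_on (case_nat c s) {..<Suc n}"
  using assms unfolding lessThan_Suc_eq_insert_0 by (auto simp: inj_on_def)

lemma partial_class_minor_inj:
  assumes K: "partial_class K"
  shows "F \<in> K \<Longrightarrow> inj_on s {..<arity F} \<Longrightarrow> s ` {..<arity F} \<subseteq> {..<k} \<Longrightarrow> minor F k s \<in> K"
proof (induction "k - arity F" arbitrary: F s)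
  case 0
  have "arity F \<le> k"
    using card_inj_on_le[OF "0.prems"(2,3)] by simp
  with 0 have k: "arity F = k" by simp
  define p where "p i = (if i < k then s i else i)" for i
  have "s ` {..<k} = {..<k}"
    using 0 k by (intro endo_inj_surj) auto
  then have "bij_betw p {..<k} {..<k}"
    using "0.prems"(2) k by (simp add: bij_betw_def p_def inj_on_def image_def)
  then have "p permutes {..<k}"
    by (rule bij_imp_permutes) (simp add: p_def)
  then have "minor F k p \<in> K"
    using closed_under_minor_permutes[OF K] 0 k unfolding closed_under_minor_def by blast
  moreover have "minor F k p = minor F k s"
    using k by (intro minor_cong) (simp add: p_def)
  ultimately show ?case by simp
next
  case (Suc d)
  have "card (s ` {..<arity F}) < card {..<k}"
    using Suc.hyps(2) Suc.prems(2) by (simp add: card_image)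
  then have "\<not> {..<k} \<subseteq> s ` {..<arity F}"
    by (meson card_mono finite_imageI finite_lessThan not_le)
  then obtain c where c: "c < k" "c \<notin> s ` {..<arity F}"
    by auto
  have "minor (nabla F) k (case_nat c s) \<in> K"
  proof (rule Suc.hyps(1))
    show "d = k - arity (nabla F)" "nabla F \<in> K"
      using Suc K unfolding partial_class_def by auto
    show "inj_on (case_nat c s) {..<arity (nabla F)}"
      using inj_on_case_nat[OF Suc.prems(2) c(2)] by simp
    show "case_nat c s ` {..<arity (nabla F)} \<subseteq> {..<k}"
      using Suc.prems(3) c(1) by (auto simp: lessThan_Suc_eq_insert_0)
  qed
  then show ?case
    by (simp add: nabla_eq_minor minor_minor comp_def)
qed

text \<open>A non-injective \<open>s\<close> identifies two variables; permuting them to the front lets \<open>Delta\<close>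
  merge them, which lowers the arity.\<close>

lemma partial_class_minor:
  assumes K: "partial_class K"
  shows "F \<in> K \<Longrightarrow> \<forall>i<arity F. s i < k \<Longrightarrow> 1 \<le> k \<Longrightarrow> minor F k s \<in> K"
proof (induction "arity F" arbitrary: F s rule: less_induct)
  case less
  define n where "n = arity F"
  show ?case
  proof (cases "inj_on s {..<n}")
    case True
    then show ?thesis
      using partial_class_minor_inj[OF K] less.prems unfolding n_def by blast
  next
    case False
    then obtain p q where pq: "p < q" "q < n" "s p = s q"
      unfolding inj_on_def by (metis lessThan_iff linorder_neqE_nat)
    define \<pi> where "\<pi> = Transposition.transpose 1 q \<circ> Transposition.transpose 0 p"
    define \<rho> where "\<rho> = Transposition.transpose 0 p \<circ> Transposition.transpose 1 q"
    have n2: "2 \<le> n" using pq by simp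
    have \<pi>_permutes: "\<pi> permutes {..<n}"
      unfolding \<pi>_def using pq by (intro permutes_compose permutes_swap_id) auto
    have \<pi>_less: "\<forall>i<n. \<pi> i < n"
      using permutes_in_image[OF \<pi>_permutes] by simp
    have \<rho>_less: "\<forall>i<n. \<rho> i < n"
      unfolding \<rho>_def using pq by (auto simp: transpose_def)
    have \<rho>_\<pi>: "\<rho> (\<pi> i) = i" for i
      unfolding \<rho>_def \<pi>_def by simp
    have \<pi>_eq_0: "\<pi> i = 0 \<longleftrightarrow> i = p" for i
      unfolding \<pi>_def using pq by (auto simp: transpose_def)
    have \<rho>_1: "\<rho> 1 = q"
      unfolding \<rho>_def using pq by (auto simp: transpose_def)
    define G where "G = Delta (minor F n \<pi>)"
    have G_eq: "G = minor F (n - 1) ((\<lambda>i. i - 1) \<circ> \<pi>)"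
      unfolding G_def using n2 \<pi>_less by (simp add: Delta_eq_minor minor_minor n_def)
    have "G \<in> K"
      using closed_under_minor_permutes[OF K \<pi>_permutes] less.prems K
      unfolding G_def closed_under_minor_def partial_class_def n_def by simp
    then have "minor G k (\<lambda>j. s (\<rho> (j + 1))) \<in> K"
      using less.prems \<rho>_less n2 by (intro less.hyps) (auto simp: G_eq n_def)
    moreover have "minor G k (\<lambda>j. s (\<rho> (j + 1))) = minor F k s"
    proof -
      have "minor G k (\<lambda>j. s (\<rho> (j + 1))) = minor F k ((\<lambda>j. s (\<rho> (j + 1))) \<circ> ((\<lambda>i. i - 1) \<circ> \<pi>))"
        unfolding G_eq using \<pi>_less n2 by (intro minor_minor) (auto simp: n_def less_diff_conv2)
      also have "\<dots> = minor F k s"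
      proof (rule minor_cong, intro allI impI)
        fix i
        show "((\<lambda>j. s (\<rho> (j + 1))) \<circ> ((\<lambda>i. i - 1) \<circ> \<pi>)) i = s i"
          using \<pi>_eq_0[of i] \<rho>_1 \<rho>_\<pi>[of i] pq(3) by (cases "\<pi> i = 0") simp_all
      qed
      finally show ?thesis .
    qed
    ultimately show ?thesis by simp
  qed
qed

section \<open>Partial classes with projections are partial clones\<close>

text \<open>For \<open>Gs = [G\<^sub>1, \<dots>, G\<^sub>n]\<close> of arity \<open>m\<close>, \<open>comp_prefix F Gs m j\<close> is
  \<open>F(G\<^sub>1(z), \<dots>, G\<^sub>j(z), y\<^sub>1, \<dots>, y\<^sub>n\<^sub>-\<^sub>j)\<close> in the variables \<open>y\<^sub>1, \<dots>, y\<^sub>n\<^sub>-\<^sub>j, z\<^sub>1, \<dots>, z\<^sub>m\<close>.\<close>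

definition comp_prefix :: "'a pfun \<Rightarrow> 'a pfun list \<Rightarrow> nat \<Rightarrow> nat \<Rightarrow> 'a pfun" where
  "comp_prefix F Gs m j = (length Gs - j + m, \<lambda>xs.
     if length xs = length Gs - j + m \<and> (\<forall>G\<in>set (take j Gs). fn G (drop (length Gs - j) xs) \<noteq> None)
     then fn F (map (\<lambda>G. the (fn G (drop (length Gs - j) xs))) (take j Gs) @ take (length Gs - j) xs)
     else None)"

lemma arity_comp_prefix [simp]: "arity (comp_prefix F Gs m j) = length Gs - j + m"
  by (simp add: comp_prefix_def arity_def)

lemma fn_comp_prefix: "fn (comp_prefix F Gs m j) xs =
    (if length xs = length Gs - j + m \<and> (\<forall>G\<in>set (take j Gs). fn G (drop (length Gs - j) xs) \<noteq> None)
     then fn F (map (\<lambda>G. the (fn G (drop (length Gs - j) xs))) (take j Gs) @ take (length Gs - j) xs)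
     else None)"
  by (simp add: comp_prefix_def fn_def)

lemma comp_prefix_0:
  assumes "arity F = length Gs"
  shows "comp_prefix F Gs m 0 = minor F (length Gs + m) id"
proof (rule pfun_eqI)
  fix xs :: "'a list"
  have "map (\<lambda>i. xs ! id i) [0..<length Gs] = take (length Gs) xs" if "length xs = length Gs + m"
    using that by (auto intro!: nth_equalityI)
  then show "fn (comp_prefix F Gs m 0) xs = fn (minor F (length Gs + m) id) xs"
    using assms by (simp add: fn_comp_prefix fn_minor)
qed simp

text \<open>One more \<open>G\<^sub>j\<^sub>+\<^sub>1\<close> is plugged in by \<open>\<star>\<close>; the minor then identifies the variables of
  \<open>G\<^sub>j\<^sub>+\<^sub>1\<close> with \<open>z\<close> and restores the order of the remaining ones.\<close>

lemma comp_prefix_Suc: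
  assumes j: "j < length Gs" and ar: "arity (Gs ! j) = m"
  shows "comp_prefix F Gs m (Suc j) = minor (pstar (comp_prefix F Gs m j) (Gs ! j))
           (length Gs - Suc j + m) (\<lambda>i. if i < m then length Gs - Suc j + i else i - m)"
proof (rule pfun_eqI)
  fix ys :: "'a list"
  define n where "n = length Gs"
  define \<sigma> where "\<sigma> i = (if i < m then n - Suc j + i else i - m)" for i
  define W where "W = comp_prefix F Gs m j"
  show "fn (comp_prefix F Gs m (Suc j)) ys = fn (minor (pstar W (Gs ! j)) (n - Suc j + m) \<sigma>) ys"
  proof (cases "length ys = n - Suc j + m")
    case False
    then show ?thesis by (simp add: fn_comp_prefix fn_minor n_def)
  next
    case True
    define zs where "zs = map (\<lambda>i. ys ! \<sigma> i) [0..<n - j + m + m - 1]"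
    have length_zs: "length zs = n - j + m + m - 1"
      by (simp add: zs_def)
    have take_zs: "take m zs = drop (n - Suc j) ys"
      using True j by (auto simp: zs_def \<sigma>_def n_def intro!: nth_equalityI)
    have drop_zs: "drop m zs = ys"
      using True j by (auto simp: zs_def \<sigma>_def n_def intro!: nth_equalityI)
    have take_Suc: "take (Suc j) Gs = take j Gs @ [Gs ! j]"
      using j by (simp add: take_Suc_conv_app_nth)
    have minor_eq: "fn (minor (pstar W (Gs ! j)) (n - Suc j + m) \<sigma>) ys
      = (case fn (Gs ! j) (drop (n - Suc j) ys) of None \<Rightarrow> None | Some y \<Rightarrow> fn W (y # ys))"
    proof -
      have "map (\<lambda>i. ys ! \<sigma> i) [0..<arity (pstar W (Gs ! j))] = zs"
        by (simp add: zs_def ar n_def W_def)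
      then have "fn (minor (pstar W (Gs ! j)) (n - Suc j + m) \<sigma>) ys = fn (pstar W (Gs ! j)) zs"
        using True by (simp add: fn_minor)
      also have "\<dots> = (case fn (Gs ! j) (drop (n - Suc j) ys) of None \<Rightarrow> None | Some y \<Rightarrow> fn W (y # ys))"
        using length_zs take_zs drop_zs[folded ar] True j
        by (simp add: fn_pstar ar n_def W_def zs_def[symmetric] split: option.split)
      finally show ?thesis .
    qed
    show ?thesis
    proof (cases "fn (Gs ! j) (drop (n - Suc j) ys)")
      case None
      then show ?thesis
        using minor_eq True take_Suc by (auto simp: fn_comp_prefix n_def)
    next
      case (Some y)
      have "n - j = Suc (n - Suc j)"
        using j n_def by simp
      then have "fn W (y # ys) = fn (comp_prefix F Gs m (Suc j)) ys"
        using True take_Suc Some by (auto simp: fn_comp_prefix n_def W_def)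
      then show ?thesis
        using minor_eq Some by simp
    qed
  qed
qed (simp add: ar)

lemma comp_prefix_length:
  assumes "Gs \<noteq> []" "arity (hd Gs) = m"
  shows "comp_prefix F Gs m (length Gs) = pcomp F Gs"
  by (rule pfun_eqI) (use assms in \<open>auto simp: fn_comp_prefix fn_pcomp\<close>)

lemma partial_class_pcomp:
  assumes K: "partial_class K" and F: "F \<in> K" and Gs: "set Gs \<subseteq> K" "length Gs = arity F"
    and m: "\<forall>G\<in>set Gs. arity G = m"
  shows "pcomp F Gs \<in> K"
proof -
  define n where "n = length Gs"
  have "Gs \<noteq> []"
    using arity_ge_1_if_P_A[OF partial_class_in_P_A[OF K F]] Gs(2) by auto
  then have "hd Gs \<in> K" and hd: "arity (hd Gs) = m"
    using m Gs(1) by auto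
  then have m1: "1 \<le> m"
    using arity_ge_1_if_P_A[OF partial_class_in_P_A[OF K]] by metis
  have "comp_prefix F Gs m j \<in> K" if "j \<le> n" for j
    using that
  proof (induction j)
    case 0
    then show ?case
      using comp_prefix_0[OF Gs(2)[symmetric]] partial_class_minor[OF K F, of id "n + m"] Gs m1 n_def
      by simp
  next
    case (Suc j)
    have Gj: "Gs ! j \<in> K" "arity (Gs ! j) = m"
      using Suc.prems Gs m n_def by auto
    have "pstar (comp_prefix F Gs m j) (Gs ! j) \<in> K"
      using Suc K Gj unfolding partial_class_def by auto
    then have "minor (pstar (comp_prefix F Gs m j) (Gs ! j)) (length Gs - Suc j + m)
        (\<lambda>i. if i < m then length Gs - Suc j + i else i - m) \<in> K"
      using Suc.prems Gj m1 by (intro partial_class_minor[OF K]) (auto simp: n_def)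
    then show ?case
      using comp_prefix_Suc[of j Gs m F] Suc.prems Gj n_def by simp
  qed
  from this[of n] show ?thesis
    using comp_prefix_length[OF \<open>Gs \<noteq> []\<close> hd] by (simp add: n_def)
qed

lemma partial_clone_if_partial_class:
  assumes "partial_class K" "\<forall>n i. 1 \<le> n \<and> i < n \<longrightarrow> proj n i \<in> K"
  shows "partial_clone K"
  using assms partial_class_pcomp[OF assms(1)] unfolding partial_clone_def partial_class_def by blast

section \<open>The strong closure of a clone\<close>

lemma partial_clone_in_P_A: "partial_clone X \<Longrightarrow> G \<in> X \<Longrightarrow> G \<in> P_A"
  unfolding partial_clone_def by blast

lemma partial_clone_pcomp:
  "partial_clone X \<Longrightarrow> F \<in> X \<Longrightarrow> set Gs \<subseteq> X \<Longrightarrow> length Gs = arity F \<Longrightarrow>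
    \<forall>G\<in>set Gs. arity G = m \<Longrightarrow> pcomp F Gs \<in> X"
  unfolding partial_clone_def by blast

lemma partial_clone_proj: "partial_clone X \<Longrightarrow> 1 \<le> n \<Longrightarrow> i < n \<Longrightarrow> proj n i \<in> X"
  unfolding partial_clone_def by blast

lemma partial_clone_minor:
  assumes X: "partial_clone X" and G: "G \<in> X" and s: "\<forall>i<arity G. s i < k" and k: "1 \<le> k"
  shows "minor G k s \<in> X"
proof -
  define Ps :: "'a pfun list" where "Ps = map (\<lambda>i. proj k (s i)) [0..<arity G]"
  have "pcomp G Ps \<in> X"
    using s k by (intro partial_clone_pcomp[OF X G, where m = k]) (auto simp: Ps_def partial_clone_proj[OF X])
  moreover have "pcomp G Ps = minor G k s"
  proof (rule pfun_eqI)
    have "hd Ps = proj k (s 0)"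
      using arity_ge_1_if_P_A[OF partial_clone_in_P_A[OF X G]]
      unfolding Ps_def by (simp add: hd_map upt_conv_Cons)
    then show "arity (pcomp G Ps) = arity (minor G k s)"
      by simp
    fix xs
    show "fn (pcomp G Ps) xs = fn (minor G k s) xs"
      using \<open>hd Ps = proj k (s 0)\<close> by (auto simp: fn_pcomp fn_minor fn_proj Ps_def comp_def)
  qed
  ultimately show ?thesis by simp
qed

lemma partial_clone_pstar:
  assumes X: "partial_clone X" and G1: "G1 \<in> X" and G2: "G2 \<in> X"
  shows "pstar G1 G2 \<in> X"
proof -
  define n1 where "n1 = arity G1"
  define n2 where "n2 = arity G2"
  define N where "N = n1 + n2 - 1"
  have n1: "n1 \<ge> 1" and n2: "n2 \<ge> 1"
    using arity_ge_1_if_P_A partial_clone_in_P_A[OF X] G1 G2 n1_def n2_def by blast+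
  define Gs where "Gs = minor G2 N (\<lambda>i. i) # map (\<lambda>i. proj N (n2 + i)) [0..<n1 - 1]"
  have "minor G2 N (\<lambda>i. i) \<in> X"
    using n1 n2 by (intro partial_clone_minor[OF X G2]) (auto simp: N_def n2_def)
  moreover have "proj N (n2 + i) \<in> X" if "i < n1 - 1" for i
    using that n1 n2 by (intro partial_clone_proj[OF X]) (auto simp: N_def)
  ultimately have "pcomp G1 Gs \<in> X"
    using n1 by (intro partial_clone_pcomp[OF X G1, where m = N]) (auto simp: Gs_def n1_def)
  moreover have "pcomp G1 Gs = pstar G1 G2"
  proof (rule pfun_eqI)
    show "arity (pcomp G1 Gs) = arity (pstar G1 G2)"
      by (simp add: Gs_def N_def n1_def n2_def)
    fix xs :: "'a list"
    show "fn (pcomp G1 Gs) xs = fn (pstar G1 G2) xs"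
    proof (cases "length xs = N")
      case False
      then show ?thesis by (simp add: fn_pcomp fn_pstar Gs_def N_def n1_def n2_def)
    next
      case True
      have "map (\<lambda>i. xs ! i) [0..<n2] = take n2 xs"
        using True n1 by (auto simp: N_def intro!: nth_equalityI)
      moreover have "map (\<lambda>i. xs ! (n2 + i)) [0..<n1 - 1] = drop n2 xs"
        using True n1 by (auto simp: N_def intro!: nth_equalityI)
      ultimately show ?thesis
        using True by (auto simp: fn_pcomp fn_pstar Gs_def fn_minor fn_proj comp_def
            n1_def[symmetric] n2_def[symmetric] N_def split: option.split)
    qed
  qed
  ultimately show ?thesis by simp
qed

lemma pf_le_refl: "pf_le F F"
  by (simp add: pf_le_def)

lemma pf_le_trans: "pf_le F G \<Longrightarrow> pf_le G H \<Longrightarrow> pf_le F H"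
  by (simp add: pf_le_def)

lemma minor_in_Str:
  assumes D: "partial_clone D" and H: "H \<in> Str D" and s: "\<forall>i<arity H. s i < k" and k: "1 \<le> k"
  shows "minor H k s \<in> Str D"
proof -
  obtain G where G: "G \<in> D" "pf_le H G" and "H \<in> P_A"
    using H by (auto simp: Str_def)
  have "minor G k s \<in> D"
    using G s by (intro partial_clone_minor[OF D G(1) _ k]) (auto simp: pf_le_def)
  moreover have "pf_le (minor H k s) (minor G k s)"
    using G(2) by (auto simp: pf_le_def fn_minor split: if_splits)
  ultimately show ?thesis
    using minor_in_P_A[OF \<open>H \<in> P_A\<close> k] by (auto simp: Str_def)
qed

lemma pstar_in_Str:
  assumes D: "partial_clone D" and H1: "H1 \<in> Str D" and H2: "H2 \<in> Str D"
  shows "pstar H1 H2 \<in> Str D"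
proof -
  obtain G1 where G1: "G1 \<in> D" "pf_le H1 G1" and "H1 \<in> P_A"
    using H1 by (auto simp: Str_def)
  obtain G2 where G2: "G2 \<in> D" "pf_le H2 G2" and "H2 \<in> P_A"
    using H2 by (auto simp: Str_def)
  have "pstar G1 G2 \<in> D"
    by (rule partial_clone_pstar[OF D G1(1) G2(1)])
  moreover have "pf_le (pstar H1 H2) (pstar G1 G2)"
    using G1(2) G2(2) by (auto simp: pf_le_def fn_pstar split: if_splits option.splits)
  ultimately show ?thesis
    using pstar_in_P_A[OF \<open>H1 \<in> P_A\<close> \<open>H2 \<in> P_A\<close>] by (auto simp: Str_def)
qed

lemma partial_class_Str:
  assumes D: "partial_clone D"
  shows "partial_class (Str D)"
  unfolding partial_class_def
proof (intro conjI ballI)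
  show "Str D \<subseteq> P_A"
    by (auto simp: Str_def)
  fix H assume H: "H \<in> Str D"
  then have HP: "H \<in> P_A"
    by (simp add: Str_def)
  then have a: "arity H \<ge> 1"
    by (rule arity_ge_1_if_P_A)
  show "zeta H \<in> Str D"
    unfolding zeta_eq_minor[OF HP] using a by (intro minor_in_Str[OF D H]) auto
  show "nabla H \<in> Str D"
    unfolding nabla_eq_minor by (intro minor_in_Str[OF D H]) auto
  show "tau H \<in> Str D"
  proof (cases "arity H < 2")
    case True
    then show ?thesis using H by (simp add: tau_def)
  next
    case False
    then show ?thesis
      unfolding tau_eq_minor[OF leI[OF False]] by (intro minor_in_Str[OF D H]) (auto simp: transpose_def)
  qed
  show "Delta H \<in> Str D"
  proof (cases "arity H < 2")
    case True
    then show ?thesis using H by (simp add: Delta_def)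
  next
    case False
    then show ?thesis
      unfolding Delta_eq_minor[OF leI[OF False]] by (intro minor_in_Str[OF D H]) auto
  qed
  fix H' assume "H' \<in> Str D"
  with H show "pstar H H' \<in> Str D"
    by (rule pstar_in_Str[OF D])
qed

section \<open>Restricting strong partial clones\<close>

lemma subset_Str: "X \<subseteq> P_A \<Longrightarrow> X \<subseteq> Str X"
  using pf_le_refl by (auto simp: Str_def)

lemma Str_Un: "Str (A \<union> B) = Str A \<union> Str B"
  unfolding Str_def by blast

lemma strong_Str: "strong (Str X)"
  unfolding strong_def Str_def using pf_le_trans pf_le_refl by blast

lemma strong_Un: "strong A \<Longrightarrow> strong B \<Longrightarrow> strong (A \<union> B)"
  unfolding strong_def by (simp add: Str_Un)

lemma strong_Int:
  assumes "strong A" "strong B"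
  shows "strong (A \<inter> B)"
proof -
  have "Str (A \<inter> B) \<subseteq> A \<inter> B"
    using assms unfolding strong_def Str_def by blast
  moreover have "A \<inter> B \<subseteq> P_A"
    using assms unfolding strong_def Str_def by blast
  ultimately show ?thesis
    using subset_Str[of "A \<inter> B"] unfolding strong_def by blast
qed

lemma Str_Int_O_A_subset:
  assumes "D \<subseteq> O_A"
  shows "Str D \<inter> O_A \<subseteq> D"
proof
  fix F assume F: "F \<in> Str D \<inter> O_A"
  then obtain G where G: "G \<in> D" "pf_le F G"
    by (auto simp: Str_def)
  have "F \<in> P_A" "G \<in> P_A" and arity: "arity F = arity G"
    using F G assms by (auto simp: O_A_def pf_le_def)
  have "F = G"
  proof (rule pfun_eqI[OF arity])
    fix xs
    show "fn F xs = fn G xs"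
    proof (cases "length xs = arity F")
      case True
      then obtain v where "fn F xs = Some v"
        using F by (auto simp: O_A_def)
      then show ?thesis
        using G by (simp add: pf_le_def)
    next
      case False
      then show ?thesis
        using \<open>F \<in> P_A\<close> \<open>G \<in> P_A\<close> arity by (simp add: fn_eq_None_if_P_A)
    qed
  qed
  with G show "F \<in> D" by simp
qed

lemma partial_class_Un:
  assumes "partial_class A" "partial_class B"
    and "set_star A B \<subseteq> A \<union> B" "set_star B A \<subseteq> A \<union> B"
  shows "partial_class (A \<union> B)"
  using assms unfolding partial_class_def set_star_def by blast

lemma partial_clone_Int:
  "partial_clone X \<Longrightarrow> partial_clone Y \<Longrightarrow> partial_clone (X \<inter> Y)"
  unfolding partial_clone_def by auto

lemma Int_in_I_str:
  assumes "X \<in> I_str C" and "partial_clone K" "strong K" "K \<inter> O_A = D" "D \<subseteq> C"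
  shows "X \<inter> K \<in> I_str D"
  using assms partial_clone_Int strong_Int unfolding I_str_def by auto

theorem mainTheorem11:
  fixes C D T :: "('a::finite) pfun set" and I :: "'a pfun set set"
  assumes "total_clone C" and "total_clone D" and "D \<subseteq> C"
    and "partial_class T" and "strong T"
    and "I \<subseteq> I_str C"
    and "T \<inter> O_A \<subseteq> D"
    and "set_star T (Str D) \<subseteq> Str D \<union> T"
    and "set_star (Str D) T \<subseteq> Str D \<union> T"
    and "\<forall>X\<in>I. \<forall>Y\<in>I. X \<noteq> Y \<longrightarrow> X \<inter> T \<noteq> Y \<inter> T"
  shows "\<exists>h. inj_on h I \<and> h ` I \<subseteq> I_str D"
proof -
  define K where "K = Str D \<union> T"
  have D: "partial_clone D" "D \<subseteq> O_A"
    using assms(2) by (auto simp: total_clone_def)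
  have "D \<subseteq> Str D"
    using D(1) subset_Str unfolding partial_clone_def by blast
  have "partial_class K"
    unfolding K_def using partial_class_Str[OF D(1)] assms(4,9,8) by (rule partial_class_Un)
  then have "partial_clone K"
    using \<open>D \<subseteq> Str D\<close> partial_clone_proj[OF D(1)] by (intro partial_clone_if_partial_class) (auto simp: K_def)
  moreover have "strong K"
    unfolding K_def using strong_Str assms(5) by (rule strong_Un)
  moreover have "K \<inter> O_A = D"
    using Str_Int_O_A_subset[OF D(2)] assms(7) \<open>D \<subseteq> Str D\<close> D(2) by (auto simp: K_def)
  ultimately have "(\<lambda>X. X \<inter> K) ` I \<subseteq> I_str D"
    using Int_in_I_str assms(3,6) by blast
  moreover have "inj_on (\<lambda>X. X \<inter> K) I"
    using assms(10) by (auto simp: inj_on_def K_def)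
  ultimately show ?thesis by blast
qed

end
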